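(* There is a function $\Gamma:\mathbb R\to\mathbb R$ such that for every $t\in\mathbb R$, $$\lim_{n\to\infty}\frac1n\log\mathbb{E}\big(e^{tH_n}\big)=\Gamma(t).$$
   Context: Standing setup (discrete-time Hawkes process, DTHP). Let $(a_i)_{i=0}^\infty$ be a sequence of strictly positive real numbers with $\sum_{i=0}^\infty a_i<1$ and $\sum_{i=1}^\infty i\,a_i<\infty$. The arrival process $\{\xi_n\}_{n\ge1}$ is a sequence of $\{0,1\}$-valued random variables on a probability space $(\Omega,\mathcal F,\mathbb P)$ with $\mathbb{P}(\xi_1=1)=a_0$, $\mathbb P(\xi_1=0)=1-a_0$, and for $n\ge2$, $$\mathbb{P}(\xi_n=1\mid \xi_1,\dots,\xi_{n-1})=a_0+\sum_{i=1}^{n-1}a_{n-i}\xi_i,\qquad \mathbb{P}(\xi_n=0\mid \xi_1,\dots,\xi_{n-1})=1-\Big(a_0+\sum_{i=1}^{n-1}a_{n-i}\xi_i\Big).$$ The DTHP is $H_n=\sum_{i=1}^n\xi_i$, and $\mathcal F_n=\sigma(\xi_1,\dots,\xi_n)$. *)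

theory Defs
  imports "HOL-Probability.Probability"
begin

text \<open>The arrival indicators are xi 1, xi 2, ...
  (index 0 is unused).  The conditional law
  P(xi n = 1 | xi 1, ..., xi (n-1)) = a 0 + sum_{i=1}^{n-1} a (n-i) * xi i
  is expressed in the elementary form for discrete random variables:
  for every 0/1 history x, the joint probability of the history together with
  xi n = 1 equals the given conditional probability times the probability of
  the history.  For n = 1 this gives P(xi 1 = 1) = a 0.\<close>

definition DTHP :: "'s measure \<Rightarrow> (nat \<Rightarrow> real) \<Rightarrow> (nat \<Rightarrow> 's \<Rightarrow> real) \<Rightarrow> bool" where
  "DTHP M a \<xi> \<longleftrightarrow>
     prob_space M \<and>
     (\<forall>n\<ge>1. \<xi> n \<in> borel_measurable M) \<and>
     (\<forall>n\<ge>1. \<forall>\<omega>\<in>space M. \<xi> n \<omega> \<in> {0, 1}) \<and>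
     (\<forall>n\<ge>1. \<forall>x::nat \<Rightarrow> real. (\<forall>i\<in>{1..n-1}. x i \<in> {0, 1}) \<longrightarrow>
        measure M {\<omega>\<in>space M. (\<forall>i\<in>{1..n-1}. \<xi> i \<omega> = x i) \<and> \<xi> n \<omega> = 1}
        = (a 0 + (\<Sum>i=1..n-1. a (n - i) * x i)) *
          measure M {\<omega>\<in>space M. \<forall>i\<in>{1..n-1}. \<xi> i \<omega> = x i})"

definition DTHP_H :: "(nat \<Rightarrow> 's \<Rightarrow> real) \<Rightarrow> nat \<Rightarrow> 's \<Rightarrow> real" where
  "DTHP_H \<xi> n \<omega> = (\<Sum>i=1..n. \<xi> i \<omega>)"

end

theory Submission
  imports Defs
begin

(* Let c k be the intensity that the baseline and the past induce k steps ahead.  Conditioning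
   on the next step gives a recursion for the conditional moment generating function of the
   number of future arrivals: with probability 1 - c 0 there is no arrival and the profile c
   shifts, with probability c 0 there is one, the profile shifts and the kernel a is added.
   The recursion is monotone in c, increasing for t >= 0 and decreasing for t <= 0, and after
   any history c dominates the baseline a 0.  Hence g n = E exp(t H_n) is supermultiplicative
   for t >= 0 and submultiplicative for t <= 0, so t ln g n is superadditive and bounded by
   t^2 n, and Fekete's lemma gives the limit of ln g n / n. *)

lemma superadditive_mult_add:
  fixes f :: "nat \<Rightarrow> real"
  assumes superadd: "\<And>m n. f m + f n \<le> f (m + n)"
  shows "real q * f k + f r \<le> f (q * k + r)"
proof (induction q)
  case (Suc q)
  have "f k + f (q * k + r) \<le> f (k + (q * k + r))" by (rule superadd)
  with Suc show ?case by (simp add: algebra_simps)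
qed simp

lemma superadditive_ratio_lower_bound:
  fixes f :: "nat \<Rightarrow> real"
  assumes superadd: "\<And>m n. f m + f n \<le> f (m + n)" and "k \<ge> 1"
  shows "\<exists>D. \<forall>n\<ge>1. f k / k - D / n \<le> f n / n"
proof -
  define D where "D = \<bar>f k\<bar> + (\<Sum>r<k. \<bar>f r\<bar>)"
  have "f k / k - D / n \<le> f n / n" if "n \<ge> 1" for n
  proof -
    define q where "q = n div k"
    define r where "r = n mod k"
    have "r < k" using \<open>k \<ge> 1\<close> by (simp add: r_def)
    have "real n = real q * real k + real r"
      unfolding q_def r_def by (metis of_nat_add of_nat_mult div_mult_mod_eq)
    then have "real q * f k = real n * (f k / k) - real r * (f k / k)"
      using \<open>k \<ge> 1\<close> by (simp add: field_simps)
    moreover have "real r * (f k / k) \<le> \<bar>f k\<bar>"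
    proof -
      have "real r * (f k / k) \<le> real r * (\<bar>f k\<bar> / k)"
        by (intro mult_left_mono divide_right_mono) auto
      also have "\<dots> \<le> real k * (\<bar>f k\<bar> / k)"
        using \<open>r < k\<close> by (intro mult_right_mono) auto
      finally show ?thesis using \<open>k \<ge> 1\<close> by simp
    qed
    moreover have "- f r \<le> (\<Sum>r<k. \<bar>f r\<bar>)"
      using \<open>r < k\<close> member_le_sum[of r "{..<k}" "\<lambda>r. \<bar>f r\<bar>"] by simp
    moreover have "real q * f k + f r \<le> f n"
      using superadditive_mult_add[of f, OF superadd, of q k r] by (simp add: q_def r_def)
    ultimately have "real n * (f k / k) - D \<le> f n" unfolding D_def by linarith
    then have "(real n * (f k / k) - D) / n \<le> f n / n"
      by (rule divide_right_mono) simp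
    then show "f k / k - D / n \<le> f n / n"
      using \<open>n \<ge> 1\<close> by (simp add: diff_divide_distrib)
  qed
  then show ?thesis by blast
qed

lemma fekete_superadditive:
  fixes f :: "nat \<Rightarrow> real"
  assumes superadd: "\<And>m n. f m + f n \<le> f (m + n)" and bounded: "\<And>n. f n \<le> C * real n"
  shows "(\<lambda>n. f n / n) \<longlonglongrightarrow> (SUP n\<in>{1..}. f n / n)"
proof -
  have bdd: "bdd_above ((\<lambda>n. f n / n) ` {1..})"
    using bounded by (intro bdd_aboveI[of _ C]) (auto simp: divide_le_eq mult.commute)
  show ?thesis
  proof (rule order_tendstoI)
    fix y assume "y < (SUP n\<in>{1..}. f n / n)"
    then obtain k where "k \<ge> 1" "y < f k / k"
      using less_cSUP_iff[OF _ bdd] by auto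
    obtain D where D: "\<And>n. n \<ge> 1 \<Longrightarrow> f k / k - D / n \<le> f n / n"
      using superadditive_ratio_lower_bound[of f, OF superadd \<open>k \<ge> 1\<close>] by blast
    have "(\<lambda>n. f k / k - D / n) \<longlonglongrightarrow> f k / k"
      by (auto intro!: tendsto_eq_intros lim_const_over_n)
    then have "eventually (\<lambda>n. y < f k / k - D / n) sequentially"
      using \<open>y < f k / k\<close> by (rule order_tendstoD)
    moreover have "eventually (\<lambda>n. n \<ge> (1::nat)) sequentially" by simp
    ultimately show "eventually (\<lambda>n. y < f n / n) sequentially"
      by eventually_elim (use D in fastforce)
  next
    fix y assume "(SUP n\<in>{1..}. f n / n) < y"
    then have "f n / n < y" if "n \<ge> 1" for n
      using cSUP_upper[OF _ bdd, of n] that by simp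
    then show "eventually (\<lambda>n. f n / n < y) sequentially"
      by (intro eventually_sequentiallyI[of 1])
  qed
qed

(* hawkes_mgf a t c m is E exp(t * number of arrivals in the next m steps) given the intensity
   profile c; next_intensity a c v is the profile one step later, after an arrival (v = 1) or
   none (v = 0). *)
definition next_intensity :: "(nat \<Rightarrow> real) \<Rightarrow> (nat \<Rightarrow> real) \<Rightarrow> real \<Rightarrow> nat \<Rightarrow> real" where
  "next_intensity a c v k = c (Suc k) + v * a (Suc k)"

fun hawkes_mgf :: "(nat \<Rightarrow> real) \<Rightarrow> real \<Rightarrow> (nat \<Rightarrow> real) \<Rightarrow> nat \<Rightarrow> real" where
  "hawkes_mgf a t c 0 = 1"
| "hawkes_mgf a t c (Suc m) =
     (1 - c 0) * hawkes_mgf a t (next_intensity a c 0) m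
     + c 0 * exp t * hawkes_mgf a t (next_intensity a c 1) m"

(* All intensities stay in [0, 1], whatever arrivals occur. *)
definition admissible_intensity :: "(nat \<Rightarrow> real) \<Rightarrow> (nat \<Rightarrow> real) \<Rightarrow> bool" where
  "admissible_intensity a c \<longleftrightarrow> (\<forall>k. 0 \<le> c k \<and> c k + (\<Sum>j=1..k. a j) \<le> 1)"

lemma admissible_intensity_nonneg:
  "admissible_intensity a c \<Longrightarrow> 0 \<le> c k"
  unfolding admissible_intensity_def by blast

lemma admissible_intensity_le_1:
  "admissible_intensity a c \<Longrightarrow> c 0 \<le> 1"
  unfolding admissible_intensity_def by (auto dest: spec[of _ 0])

lemma admissible_intensity_mono:
  "admissible_intensity a d \<Longrightarrow> (\<And>k. 0 \<le> c k) \<Longrightarrow> (\<And>k. c k \<le> d k) \<Longrightarrow> admissible_intensity a c"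
  unfolding admissible_intensity_def by (smt (verit))

lemma admissible_next_intensity:
  assumes "\<And>i. 0 \<le> a i" and "admissible_intensity a c" and "0 \<le> v" "v \<le> 1"
  shows "admissible_intensity a (next_intensity a c v)"
  unfolding admissible_intensity_def next_intensity_def
proof
  fix k
  have "c (Suc k) + (\<Sum>j=1..Suc k. a j) \<le> 1" "0 \<le> c (Suc k)"
    using assms(2) unfolding admissible_intensity_def by blast+
  moreover have "0 \<le> v * a (Suc k)" "v * a (Suc k) \<le> a (Suc k)"
    using assms(1)[of "Suc k"] assms(3,4) by (simp_all add: mult_left_le_one_le)
  ultimately show "0 \<le> c (Suc k) + v * a (Suc k) \<and> c (Suc k) + v * a (Suc k) + (\<Sum>j=1..k. a j) \<le> 1"
    by simp
qed

lemma admissible_intensity_baseline: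
  assumes "\<And>i. 0 \<le> a i" and "summable a" and "(\<Sum>i. a i) \<le> 1"
  shows "admissible_intensity a (\<lambda>_. a 0)"
  unfolding admissible_intensity_def
proof
  fix k
  have "a 0 + (\<Sum>j=1..k. a j) = (\<Sum>j<Suc k. a j)"
    unfolding sum.lessThan_Suc_shift by (simp add: sum.atLeast1_atMost_eq)
  also have "\<dots> \<le> (\<Sum>i. a i)"
    using assms(1,2) by (intro sum_le_suminf) auto
  finally show "0 \<le> a 0 \<and> a 0 + (\<Sum>j=1..k. a j) \<le> 1"
    using assms(1,3) by simp
qed

lemma hawkes_mgf_between_powers:
  assumes a_nonneg: "\<And>i. 0 \<le> a i" and "admissible_intensity a c"
    and "0 \<le> lo" "lo \<le> 1" "lo \<le> exp t" "1 \<le> hi" "exp t \<le> hi"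
  shows "hawkes_mgf a t c m \<in> {lo ^ m .. hi ^ m}"
  using assms(2)
proof (induction m arbitrary: c)
  case (Suc m)
  let ?A = "hawkes_mgf a t (next_intensity a c 0) m"
  let ?B = "exp t * hawkes_mgf a t (next_intensity a c 1) m"
  have IH: "hawkes_mgf a t (next_intensity a c v) m \<in> {lo ^ m .. hi ^ m}" if "0 \<le> v" "v \<le> 1" for v
    using Suc.IH admissible_next_intensity[OF a_nonneg Suc.prems that] .
  have "lo ^ Suc m \<le> lo ^ m" "hi ^ m \<le> hi ^ Suc m"
    using assms(3-6) by (simp_all add: mult_left_le_one_le)
  then have "?A \<in> {lo ^ Suc m .. hi ^ Suc m}"
    using IH[of 0] by simp
  moreover have "?B \<in> {lo ^ Suc m .. hi ^ Suc m}"
  proof -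
    have "0 \<le> lo ^ m" using assms(3) by simp
    then have "0 \<le> hawkes_mgf a t (next_intensity a c 1) m" using IH[of 1] by simp
    with IH[of 1] assms(3-7) show ?thesis by (auto intro!: mult_mono)
  qed
  moreover have "0 \<le> c 0" "c 0 \<le> 1"
    using Suc.prems by (auto intro: admissible_intensity_nonneg admissible_intensity_le_1)
  ultimately show ?case
    using convexD[OF convex_real_interval(5), of ?A _ _ ?B "1 - c 0" "c 0"]
    by (simp add: mult.assoc)
qed simp

lemma hawkes_mgf_pos:
  assumes "\<And>i. 0 \<le> a i" and "admissible_intensity a c"
  shows "0 < hawkes_mgf a t c m"
proof -
  have "hawkes_mgf a t c m \<in> {exp (- \<bar>t\<bar>) ^ m .. exp \<bar>t\<bar> ^ m}"
    by (rule hawkes_mgf_between_powers[OF assms]) auto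
  then show ?thesis by (auto intro: less_le_trans[of 0 "exp (- \<bar>t\<bar>) ^ m"])
qed

lemma abs_ln_hawkes_mgf_le:
  assumes "\<And>i. 0 \<le> a i" and "admissible_intensity a c"
  shows "\<bar>ln (hawkes_mgf a t c m)\<bar> \<le> \<bar>t\<bar> * m"
proof -
  have "hawkes_mgf a t c m \<in> {exp (- \<bar>t\<bar> * m) .. exp (\<bar>t\<bar> * m)}"
    using hawkes_mgf_between_powers[OF assms, where lo = "exp (- \<bar>t\<bar>)" and hi = "exp \<bar>t\<bar>" and m = m]
    by (simp add: exp_of_nat_mult[symmetric] mult.commute)
  then have "ln (exp (- \<bar>t\<bar> * m)) \<le> ln (hawkes_mgf a t c m)"
    "ln (hawkes_mgf a t c m) \<le> ln (exp (\<bar>t\<bar> * m))"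
    using hawkes_mgf_pos[OF assms] by (simp_all del: ln_exp)
  then show ?thesis by (simp add: abs_le_iff)
qed

lemma mult_exp_minus_one_nonneg: "0 \<le> (t::real) * (exp t - 1)"
  by (cases "0 \<le> t") (simp_all add: mult_nonpos_nonpos)

(* The factor t states both directions at once. *)
lemma hawkes_mgf_signed_mono:
  assumes a_nonneg: "\<And>i. 0 \<le> a i"
  shows "admissible_intensity a d \<Longrightarrow> (\<And>k. 0 \<le> c k) \<Longrightarrow> (\<And>k. c k \<le> d k) \<Longrightarrow>
    0 \<le> t * (hawkes_mgf a t d m - hawkes_mgf a t c m)"
proof (induction m arbitrary: c d)
  case (Suc m)
  have c: "admissible_intensity a c"
    using Suc.prems by (rule admissible_intensity_mono)
  have adm: "admissible_intensity a (next_intensity a e v)"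
    if "admissible_intensity a e" "v \<in> {0, 1}" for e v
    using admissible_next_intensity[of a, OF a_nonneg that(1)] that(2) by auto
  have next_c_nonneg: "0 \<le> next_intensity a c v k" if "v \<in> {0, 1}" for v k
    using admissible_intensity_nonneg[OF adm[OF c that]] .
  have next_c_le_d: "next_intensity a c v k \<le> next_intensity a d v k" for v k
    using Suc.prems(3)[of "Suc k"] by (simp add: next_intensity_def)
  have next_c_0_le_1: "next_intensity a c 0 k \<le> next_intensity a c 1 k" for k
    using a_nonneg[of "Suc k"] by (simp add: next_intensity_def)
  let ?Ac = "hawkes_mgf a t (next_intensity a c 0) m"
  let ?Bc = "hawkes_mgf a t (next_intensity a c 1) m"
  let ?Ad = "hawkes_mgf a t (next_intensity a d 0) m"
  let ?Bd = "hawkes_mgf a t (next_intensity a d 1) m"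
  have "0 \<le> t * (?Ad - ?Ac)" "0 \<le> t * (?Bd - ?Bc)"
    using Suc.IH[OF adm[OF Suc.prems(1)] next_c_nonneg next_c_le_d] by simp_all
  moreover have "0 \<le> t * (?Bc - ?Ac)"
    using Suc.IH[OF adm[OF c] next_c_nonneg next_c_0_le_1] by simp
  moreover have "0 \<le> ?Bc"
    using hawkes_mgf_pos[OF a_nonneg adm[OF c]] by (simp add: less_imp_le)
  moreover have "0 \<le> c 0" "c 0 \<le> d 0" "d 0 \<le> 1"
    using Suc.prems admissible_intensity_le_1 by auto
  moreover have "t * (hawkes_mgf a t d (Suc m) - hawkes_mgf a t c (Suc m))
    = (1 - d 0) * (t * (?Ad - ?Ac)) + d 0 * exp t * (t * (?Bd - ?Bc))
      + (d 0 - c 0) * (t * (exp t - 1) * ?Bc + t * (?Bc - ?Ac))"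
    by (simp add: algebra_simps)
  ultimately show ?case
    using mult_exp_minus_one_nonneg[of t] by simp
qed simp

lemma hawkes_mgf_signed_supermult:
  assumes a_nonneg: "\<And>i. 0 \<le> a i"
  shows "admissible_intensity a c \<Longrightarrow> (\<And>k. a 0 \<le> c k) \<Longrightarrow>
    0 \<le> t * (hawkes_mgf a t c (n + m) - hawkes_mgf a t c n * hawkes_mgf a t (\<lambda>_. a 0) m)"
proof (induction n arbitrary: c)
  case 0
  then show ?case
    using hawkes_mgf_signed_mono[OF a_nonneg, where d = c and c = "\<lambda>_. a 0"] a_nonneg by simp
next
  case (Suc n)
  let ?W0 = "hawkes_mgf a t (\<lambda>_. a 0) m"
  let ?gap = "\<lambda>e. hawkes_mgf a t e (n + m) - hawkes_mgf a t e n * ?W0"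
  have IH: "0 \<le> t * ?gap (next_intensity a c v)" if "0 \<le> v" "v \<le> 1" for v
  proof (rule Suc.IH)
    show "admissible_intensity a (next_intensity a c v)"
      using admissible_next_intensity[of a, OF a_nonneg Suc.prems(1) that] .
    show "a 0 \<le> next_intensity a c v k" for k
      using Suc.prems(2)[of "Suc k"] a_nonneg[of "Suc k"] that
      by (simp add: next_intensity_def add_increasing2)
  qed
  have "t * (hawkes_mgf a t c (Suc n + m) - hawkes_mgf a t c (Suc n) * ?W0)
    = (1 - c 0) * (t * ?gap (next_intensity a c 0)) + c 0 * exp t * (t * ?gap (next_intensity a c 1))"
    by (simp add: algebra_simps)
  moreover have "0 \<le> c 0" "c 0 \<le> 1"
    using Suc.prems(1) admissible_intensity_nonneg admissible_intensity_le_1 by auto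
  ultimately show ?case
    using IH[of 0] IH[of 1] by simp
qed

lemma signed_ln_hawkes_mgf_superadditive:
  assumes a_nonneg: "\<And>i. 0 \<le> a i" and adm: "admissible_intensity a (\<lambda>_. a 0)"
  shows "t * ln (hawkes_mgf a t (\<lambda>_. a 0) m) + t * ln (hawkes_mgf a t (\<lambda>_. a 0) n)
    \<le> t * ln (hawkes_mgf a t (\<lambda>_. a 0) (m + n))"
proof -
  let ?g = "hawkes_mgf a t (\<lambda>_. a 0)"
  have pos: "0 < ?g k" for k
    by (rule hawkes_mgf_pos[OF a_nonneg adm])
  have "0 \<le> t * (?g (m + n) - ?g m * ?g n)"
    using hawkes_mgf_signed_supermult[OF a_nonneg adm] by simp
  then have "0 \<le> t * (ln (?g (m + n)) - ln (?g m * ?g n))"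
    using pos by (auto simp: zero_le_mult_iff)
  then show ?thesis
    using ln_mult_pos[OF pos pos] by (simp add: algebra_simps)
qed

lemma convergent_ln_hawkes_mgf_div:
  assumes a_nonneg: "\<And>i. 0 \<le> a i" and adm: "admissible_intensity a (\<lambda>_. a 0)"
  shows "convergent (\<lambda>n. ln (hawkes_mgf a t (\<lambda>_. a 0) n) / n)"
proof (cases "t = 0")
  case True
  then show ?thesis
    using abs_ln_hawkes_mgf_le[OF a_nonneg adm, of t] by (simp add: convergent_const)
next
  case False
  let ?f = "\<lambda>n. t * ln (hawkes_mgf a t (\<lambda>_. a 0) n)"
  have "?f n \<le> t\<^sup>2 * n" for n
  proof -
    have "?f n \<le> \<bar>t\<bar> * \<bar>ln (hawkes_mgf a t (\<lambda>_. a 0) n)\<bar>"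
      by (simp add: abs_mult[symmetric])
    also have "\<dots> \<le> \<bar>t\<bar> * (\<bar>t\<bar> * n)"
      by (intro mult_left_mono abs_ln_hawkes_mgf_le[OF a_nonneg adm]) simp
    finally show ?thesis by (simp add: power2_eq_square mult.assoc)
  qed
  then have "convergent (\<lambda>n. ?f n / n)"
    using fekete_superadditive[of ?f, OF signed_ln_hawkes_mgf_superadditive[OF a_nonneg adm]]
    by (blast intro: convergentI)
  then show ?thesis
    using convergent_mult_const_iff[OF False, of "\<lambda>n. ln (hawkes_mgf a t (\<lambda>_. a 0) n) / n"]
    by simp
qed

lemma DTHP_prob_space: "DTHP M a \<xi> \<Longrightarrow> prob_space M"
  unfolding DTHP_def by blast

lemma DTHP_measurable: "DTHP M a \<xi> \<Longrightarrow> 1 \<le> i \<Longrightarrow> \<xi> i \<in> borel_measurable M"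
  unfolding DTHP_def by blast

lemma DTHP_values: "DTHP M a \<xi> \<Longrightarrow> 1 \<le> i \<Longrightarrow> \<omega> \<in> space M \<Longrightarrow> \<xi> i \<omega> \<in> {0, 1}"
  unfolding DTHP_def by blast

definition history_event :: "'s measure \<Rightarrow> (nat \<Rightarrow> 's \<Rightarrow> real) \<Rightarrow> nat \<Rightarrow> (nat \<Rightarrow> real) \<Rightarrow> 's set" where
  "history_event M \<xi> n x = {\<omega>\<in>space M. \<forall>i\<in>{1..n}. \<xi> i \<omega> = x i}"

(* The intensity at time n + 1 + k induced by the baseline and the arrivals x 1, ..., x n. *)
definition future_intensity :: "(nat \<Rightarrow> real) \<Rightarrow> nat \<Rightarrow> (nat \<Rightarrow> real) \<Rightarrow> nat \<Rightarrow> real" where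
  "future_intensity a n x k = a 0 + (\<Sum>i=1..n. a (Suc n + k - i) * x i)"

lemma history_event_0: "history_event M \<xi> 0 x = space M"
  unfolding history_event_def by simp

lemma history_event_Suc:
  "history_event M \<xi> (Suc n) (x(Suc n := v)) = {\<omega>\<in>history_event M \<xi> n x. \<xi> (Suc n) \<omega> = v}"
  unfolding history_event_def by (auto simp: atLeastAtMostSuc_conv)

lemma sets_history_event:
  assumes "DTHP M a \<xi>" shows "history_event M \<xi> n x \<in> sets M"
  unfolding history_event_def
proof (intro sets.sets_Collect_finite_All)
  fix i assume "i \<in> {1..n}"
  then have [measurable]: "\<xi> i \<in> borel_measurable M"
    using DTHP_measurable[OF assms] by simp
  show "{\<omega>\<in>space M. \<xi> i \<omega> = x i} \<in> sets M" by measurable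
qed simp

lemma future_intensity_0: "future_intensity a 0 x = (\<lambda>_. a 0)"
  unfolding future_intensity_def by auto

lemma future_intensity_Suc:
  "future_intensity a (Suc n) (x(Suc n := v)) = next_intensity a (future_intensity a n x) v"
  unfolding future_intensity_def next_intensity_def
  by (auto intro!: sum.cong simp: fun_eq_iff)

lemma measure_history_event_arrival:
  assumes "DTHP M a \<xi>" "\<forall>i\<in>{1..n}. x i \<in> {0, 1}"
  shows "measure M (history_event M \<xi> (Suc n) (x(Suc n := 1)))
    = future_intensity a n x 0 * measure M (history_event M \<xi> n x)"
proof -
  have "\<forall>n\<ge>1. \<forall>x. (\<forall>i\<in>{1..n-1}. x i \<in> {0, 1}) \<longrightarrow>
    measure M {\<omega>\<in>space M. (\<forall>i\<in>{1..n-1}. \<xi> i \<omega> = x i) \<and> \<xi> n \<omega> = 1}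
    = (a 0 + (\<Sum>i=1..n-1. a (n - i) * x i)) * measure M {\<omega>\<in>space M. \<forall>i\<in>{1..n-1}. \<xi> i \<omega> = x i}"
    using assms(1) unfolding DTHP_def by blast
  from this[rule_format, of "Suc n" x] assms(2) show ?thesis
    unfolding history_event_Suc by (simp add: history_event_def future_intensity_def)
qed

lemma measure_history_event_no_arrival:
  assumes "DTHP M a \<xi>" "\<forall>i\<in>{1..n}. x i \<in> {0, 1}"
  shows "measure M (history_event M \<xi> (Suc n) (x(Suc n := 0)))
    = (1 - future_intensity a n x 0) * measure M (history_event M \<xi> n x)"
proof -
  interpret prob_space M using DTHP_prob_space[OF assms(1)] .
  have "history_event M \<xi> (Suc n) (x(Suc n := 0))
    = history_event M \<xi> n x - history_event M \<xi> (Suc n) (x(Suc n := 1))"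
    using DTHP_values[OF assms(1), of "Suc n"] unfolding history_event_Suc
    by (auto simp: history_event_def)
  moreover have "history_event M \<xi> (Suc n) (x(Suc n := 1)) \<subseteq> history_event M \<xi> n x"
    unfolding history_event_Suc by auto
  ultimately show ?thesis
    using sets_history_event[OF assms(1)] measure_history_event_arrival[OF assms]
    by (simp add: finite_measure_Diff algebra_simps)
qed

lemma abs_sum_arrivals_le:
  assumes "DTHP M a \<xi>" "\<omega> \<in> space M"
  shows "\<bar>\<Sum>i<m. \<xi> (Suc j + i) \<omega>\<bar> \<le> m"
proof -
  have "\<bar>\<xi> (Suc j + i) \<omega>\<bar> \<le> 1" for i
    using DTHP_values[OF assms(1) _ assms(2), of "Suc j + i"] by auto
  then show ?thesis
    using order_trans[OF sum_abs sum_bounded_above[of "{..<m}" "\<lambda>i. \<bar>\<xi> (Suc j + i) \<omega>\<bar>" 1]] by simp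
qed

lemma integrable_indicator_exp_arrivals:
  assumes D: "DTHP M a \<xi>" and "A \<in> sets M"
  shows "integrable M (\<lambda>\<omega>. indicator A \<omega> * exp (t * (\<Sum>i<m. \<xi> (Suc j + i) \<omega>)))"
proof -
  interpret prob_space M using DTHP_prob_space[OF D] .
  have [measurable]: "\<xi> (Suc j + i) \<in> borel_measurable M" for i
    using DTHP_measurable[OF D] by simp
  show ?thesis
  proof (rule integrable_const_bound[where B = "exp (\<bar>t\<bar> * m)"])
    have "t * (\<Sum>i<m. \<xi> (Suc j + i) \<omega>) \<le> \<bar>t\<bar> * m" if "\<omega> \<in> space M" for \<omega>
      using abs_sum_arrivals_le[OF D that] abs_le_D1[of "t * (\<Sum>i<m. \<xi> (Suc j + i) \<omega>)"]
      by (simp add: abs_mult mult_left_mono)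
    then show "AE \<omega> in M. norm (indicator A \<omega> * exp (t * (\<Sum>i<m. \<xi> (Suc j + i) \<omega>))) \<le> exp (\<bar>t\<bar> * m)"
      by (intro AE_I2) (auto simp: indicator_def)
    show "(\<lambda>\<omega>. indicator A \<omega> * exp (t * (\<Sum>i<m. \<xi> (Suc j + i) \<omega>))) \<in> borel_measurable M"
      using assms(2) by measurable
  qed
qed

lemma integral_history_event_exp_arrivals:
  assumes D: "DTHP M a \<xi>"
  shows "(\<forall>i\<in>{1..n}. x i \<in> {0, 1}) \<Longrightarrow>
    (\<integral>\<omega>. indicator (history_event M \<xi> n x) \<omega> * exp (t * (\<Sum>i<m. \<xi> (Suc n + i) \<omega>)) \<partial>M)
     = measure M (history_event M \<xi> n x) * hawkes_mgf a t (future_intensity a n x) m"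
proof (induction m arbitrary: n x)
  case 0
  then show ?case using sets_history_event[OF D] by simp
next
  case (Suc m)
  define E where "E v = history_event M \<xi> (Suc n) (x(Suc n := v))" for v
  define F where "F \<omega> = exp (t * (\<Sum>i<m. \<xi> (Suc (Suc n) + i) \<omega>))" for \<omega>
  let ?c = "future_intensity a n x"
  have split: "indicator (history_event M \<xi> n x) \<omega> * exp (t * (\<Sum>i<Suc m. \<xi> (Suc n + i) \<omega>))
    = indicator (E 0) \<omega> * F \<omega> + exp t * (indicator (E 1) \<omega> * F \<omega>)" if "\<omega> \<in> space M" for \<omega>
  proof -
    have "(\<Sum>i<Suc m. \<xi> (Suc n + i) \<omega>) = \<xi> (Suc n) \<omega> + (\<Sum>i<m. \<xi> (Suc (Suc n) + i) \<omega>)"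
      unfolding sum.lessThan_Suc_shift by simp
    moreover have "\<xi> (Suc n) \<omega> \<in> {0, 1}"
      using DTHP_values[OF D _ that] by simp
    ultimately show ?thesis
      unfolding E_def F_def history_event_Suc by (auto simp: indicator_def exp_add distrib_left)
  qed
  have integrable: "integrable M (\<lambda>\<omega>. indicator (E v) \<omega> * F \<omega>)" for v
    unfolding E_def F_def
    by (rule integrable_indicator_exp_arrivals[OF D sets_history_event[OF D]])
  have IH: "(\<integral>\<omega>. indicator (E v) \<omega> * F \<omega> \<partial>M)
    = measure M (E v) * hawkes_mgf a t (next_intensity a ?c v) m" if "v \<in> {0, 1}" for v
  proof -
    have "\<forall>i\<in>{1..Suc n}. (x(Suc n := v)) i \<in> {0, 1}"
      using Suc.prems that by simp
    from Suc.IH[of "Suc n" "x(Suc n := v)", OF this] show ?thesis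
      unfolding E_def F_def future_intensity_Suc .
  qed
  have "(\<integral>\<omega>. indicator (history_event M \<xi> n x) \<omega> * exp (t * (\<Sum>i<Suc m. \<xi> (Suc n + i) \<omega>)) \<partial>M)
    = (\<integral>\<omega>. indicator (E 0) \<omega> * F \<omega> \<partial>M) + exp t * (\<integral>\<omega>. indicator (E 1) \<omega> * F \<omega> \<partial>M)"
    by (subst Bochner_Integration.integral_cong[OF refl split]) (auto simp: integrable)
  also have "\<dots> = measure M (E 0) * hawkes_mgf a t (next_intensity a ?c 0) m
      + exp t * (measure M (E 1) * hawkes_mgf a t (next_intensity a ?c 1) m)"
    using IH by simp
  also have "\<dots> = measure M (history_event M \<xi> n x) * hawkes_mgf a t ?c (Suc m)"
    unfolding E_def measure_history_event_arrival[OF D Suc.prems]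
      measure_history_event_no_arrival[OF D Suc.prems]
    by (simp add: algebra_simps)
  finally show ?case .
qed

lemma expectation_exp_DTHP_H:
  assumes D: "DTHP M a \<xi>"
  shows "(\<integral>\<omega>. exp (t * DTHP_H \<xi> n \<omega>) \<partial>M) = hawkes_mgf a t (\<lambda>_. a 0) n"
proof -
  interpret prob_space M using DTHP_prob_space[OF D] .
  have "DTHP_H \<xi> n \<omega> = (\<Sum>i<n. \<xi> (Suc 0 + i) \<omega>)" for \<omega>
    unfolding DTHP_H_def by (induction n) auto
  then have "(\<integral>\<omega>. exp (t * DTHP_H \<xi> n \<omega>) \<partial>M)
      = (\<integral>\<omega>. indicator (history_event M \<xi> 0 x) \<omega> * exp (t * (\<Sum>i<n. \<xi> (Suc 0 + i) \<omega>)) \<partial>M)" for x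
    by (intro Bochner_Integration.integral_cong) (auto simp: history_event_0)
  then show ?thesis
    using integral_history_event_exp_arrivals[OF D, of 0 "\<lambda>_. 0" t n]
    by (simp add: history_event_0 future_intensity_0 prob_space)
qed

theorem theorem4p5:
  fixes M :: "'s measure" and a :: "nat \<Rightarrow> real" and \<xi> :: "nat \<Rightarrow> 's \<Rightarrow> real"
  assumes a_pos: "\<forall>i. a i > 0"
    and a_summable: "summable a"
    and a_sum_lt1: "(\<Sum>i. a i) < 1"
    and a_moment: "summable (\<lambda>i. real i * a i)"
    and hawkes: "DTHP M a \<xi>"
  shows "\<exists>\<Gamma> :: real \<Rightarrow> real. \<forall>t::real.
           (\<lambda>n. ln (\<integral>\<omega>. exp (t * DTHP_H \<xi> n \<omega>) \<partial>M) / real n) \<longlonglongrightarrow> \<Gamma> t"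
proof -
  have a_nonneg: "\<And>i. 0 \<le> a i"
    using a_pos by (simp add: less_imp_le)
  have adm: "admissible_intensity a (\<lambda>_. a 0)"
    using admissible_intensity_baseline[OF a_nonneg a_summable] a_sum_lt1 by simp
  have "convergent (\<lambda>n. ln (\<integral>\<omega>. exp (t * DTHP_H \<xi> n \<omega>) \<partial>M) / real n)" for t
    unfolding expectation_exp_DTHP_H[OF hawkes]
    by (rule convergent_ln_hawkes_mgf_div[OF a_nonneg adm])
  then show ?thesis
    by (intro exI[of _ "\<lambda>t. lim (\<lambda>n. ln (\<integral>\<omega>. exp (t * DTHP_H \<xi> n \<omega>) \<partial>M) / real n)"] allI)
      (simp add: convergent_LIMSEQ_iff)
qed

end
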